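(* Let $\sigma_t=e^{Y_t}$, where $Y_t=\varphi Y_{t-1}+\eta_t$ is the causal stationary AR(1) process with $\varphi\in(-1,1)$ and i.i.d. $(\eta_t)$. Assume that $P(e^\eta>x)=x^{-\alpha}L(x)$, $x>0$, for some $\alpha>0$ and slowly varying $L$, and, if $\varphi<0$, additionally $P(e^{\eta^-}>x)\le cP(e^\eta>x)$ for $x\ge1$ and some constant $c>0$. Then $Ee^{(\alpha+\varepsilon)\varphi Y}<\infty$ for some $\varepsilon>0$, and $$P(\sigma>x)\sim Ee^{\alpha\varphi Y}\,P(e^\eta>x)=Ee^{\alpha\varphi Y}\,x^{-\alpha}L(x),\qquad x\to\infty.$$
   Context: The causal stationary AR(1) process is $Y_t=\sum_{j\ge0}\varphi^j\eta_{t-j}$, where $(\eta_t)$ is i.i.d.; $\eta$, $Y$, $\sigma$ denote generic elements; $\eta^-=\max(-\eta,0)$. *)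

theory Defs
  imports "HOL-Probability.Probability" "HOL-Library.Landau_Symbols"
begin

definition slowly_varying :: "(real \<Rightarrow> real) \<Rightarrow> bool" where
  "slowly_varying L \<longleftrightarrow>
     (\<forall>\<^sub>F x in at_top. L x > 0) \<and>
     (\<forall>c>0. ((\<lambda>x. L (c * x) / L x) \<longlongrightarrow> 1) at_top)"

end

theory Submission
  imports Defs
begin

text \<open>
  Write \<open>Y = \<eta>\<^sub>0 + \<phi> Y'\<close>, where \<open>Y'\<close> is the process at time \<open>-1\<close>; it has the law of \<open>Y\<close>
  and is independent of \<open>\<eta>\<^sub>0\<close>. Breiman's lemma then gives
  \<open>P(exp \<eta>\<^sub>0 * exp (\<phi> Y') > x) \<sim> E exp (\<alpha> \<phi> Y) * P(exp \<eta> > x)\<close>, provided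
  \<open>E exp ((\<alpha> + \<epsilon>) \<phi> Y) < \<infinity>\<close>. It is proved by dominated convergence for
  \<open>\<integral> P(exp \<eta> > x exp (-a)) / P(exp \<eta> > x) d\<mu>(a)\<close>: Potter bounds dominate the integrand while
  \<open>x exp (-a)\<close> stays above a fixed threshold, and the remaining range of \<open>a\<close> has probability
  \<open>O(x powr -(\<alpha> + \<epsilon>))\<close>, negligible against the regularly varying tail.

  Regular variation makes \<open>E exp (t \<eta>\<^sup>+)\<close> finite
  for \<open>t < \<alpha>\<close>, hence \<open>E exp (t \<eta>) \<le> 1 + K |t|\<close> for \<open>|t| \<le> t\<^sub>0 < \<alpha>\<close> (negative \<open>t\<close> occur
  only when \<open>\<phi> < 0\<close>, and then the hypothesis on \<open>\<eta>\<^sup>-\<close> applies). With \<open>|(\<alpha> + \<epsilon>) \<phi>| = t\<^sub>0\<close>,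
  independence bounds the exponential moment of each partial sum by
  \<open>\<Prod>\<^sub>j (1 + K t\<^sub>0 |\<phi>|\<^sup>j) \<le> exp (K t\<^sub>0 / (1 - |\<phi>|))\<close>, and Fatou's lemma passes to the limit.
\<close>

lemma ennreal_le_suminf: "(f :: nat \<Rightarrow> ennreal) n \<le> suminf f"
  using sum_le_suminf[of f "{n}"] by simp

lemma dyadic_cover:
  assumes "w > 0"
  obtains n :: nat where "2 ^ n < exp w" "w \<le> real (n + 1) * ln 2"
proof -
  define n where "n = nat \<lceil>w / ln 2\<rceil> - 1"
  have k: "real (n + 1) = of_int \<lceil>w / ln 2\<rceil>"
    using assms by (simp add: n_def)
  have "w / ln 2 \<le> real (n + 1)" using k by simp
  then have "w \<le> real (n + 1) * ln 2" by (simp add: divide_le_eq)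
  moreover have "real n < w / ln 2" using k ceiling_correct[of "w / ln 2"] by simp
  then have "exp (real n * ln 2) < exp w" by (simp add: less_divide_eq)
  then have "(2::real) ^ n < exp w" by (simp add: exp_of_nat_mult)
  ultimately show ?thesis using that by blast
qed

lemma ennreal_exp_le_dyadic_sum:
  fixes t w :: real
  assumes "0 \<le> t"
  shows "ennreal (exp (t * max w 0))
    \<le> 1 + (\<Sum>n. ennreal (exp (t * ln 2) ^ (n + 1)) * indicator {v. 2 ^ n < exp (max v 0)} w)"
proof (cases "w \<le> 0")
  case False
  then obtain n :: nat where "2 ^ n < exp w" and "w \<le> real (n + 1) * ln 2"
    using dyadic_cover[of w] by auto
  then have "exp (t * max w 0) \<le> exp (t * (real (n + 1) * ln 2))"
    using False \<open>0 \<le> t\<close> by (simp add: mult_left_mono)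
  also have "\<dots> = exp (t * ln 2) ^ (n + 1)"
    by (simp add: exp_of_nat_mult[symmetric] algebra_simps exp_add)
  finally have "ennreal (exp (t * max w 0))
      \<le> ennreal (exp (t * ln 2) ^ (n + 1)) * indicator {v. 2 ^ n < exp (max v 0)} w"
    using \<open>2 ^ n < exp w\<close> False by (simp add: ennreal_leI)
  also have "\<dots> \<le> (\<Sum>n. ennreal (exp (t * ln 2) ^ (n + 1)) * indicator {v. 2 ^ n < exp (max v 0)} w)"
    by (rule ennreal_le_suminf)
  finally show ?thesis by (simp add: add_increasing)
qed simp

lemma exp_max_zero_gt_iff:
  fixes v x :: real
  assumes "x \<ge> 1"
  shows "exp (max v 0) > x \<longleftrightarrow> exp v > x"
proof (cases "v \<le> 0")
  case True
  then have "exp v \<le> 1" by simp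
  then show ?thesis using True assms by (simp add: max_def del: exp_le_one_iff)
qed (simp add: max_def)

lemma exp_le_one_plus_linear:
  fixes t t0 t1 v :: real
  assumes "0 \<le> t" "t \<le> t0" "t0 < t1"
  shows "exp (t * v) \<le> 1 + t / (t1 - t0) * exp (t1 * max v 0)"
proof -
  define w where "w = max v 0"
  have w: "w \<ge> 0" "t * v \<le> t * w" using assms(1) by (simp_all add: w_def mult_left_mono)
  have "1 - t * w \<le> exp (- (t * w))" using exp_ge_add_one_self[of "- (t * w)"] by simp
  then have "(1 - t * w) * exp (t * w) \<le> 1"
    using mult_right_mono[of _ _ "exp (t * w)"] by (simp add: exp_minus field_simps)
  then have "exp (t * w) \<le> 1 + t * (w * exp (t * w))" by (simp add: algebra_simps)
  also have "w * exp (t * w) \<le> w * exp (t0 * w)"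
    using w assms by (intro mult_left_mono) (auto intro: mult_right_mono)
  also have "w * exp (t0 * w) \<le> exp (t1 * w) / (t1 - t0)"
  proof -
    have "(t1 - t0) * w \<le> exp ((t1 - t0) * w)" using exp_ge_add_one_self[of "(t1 - t0) * w"] by linarith
    then have "((t1 - t0) * w) * exp (t0 * w) \<le> exp ((t1 - t0) * w) * exp (t0 * w)"
      by (intro mult_right_mono) auto
    also have "exp ((t1 - t0) * w) * exp (t0 * w) = exp (t1 * w)"
      by (simp add: exp_add[symmetric] algebra_simps)
    finally show ?thesis using assms by (simp add: field_simps)
  qed
  finally have "exp (t * w) \<le> 1 + t / (t1 - t0) * exp (t1 * w)"
    using assms by (simp add: mult_left_mono)
  moreover have "exp (t * v) \<le> exp (t * w)" using w by simp
  ultimately show ?thesis unfolding w_def by linarith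
qed

lemma prod_ennreal_le_exp_sum:
  fixes n :: nat
  assumes "\<And>j. j < n \<Longrightarrow> f j \<le> ennreal (1 + x j)" and "\<And>j. j < n \<Longrightarrow> 0 \<le> x j"
  shows "(\<Prod>j<n. f j) \<le> ennreal (exp (\<Sum>j<n. x j))"
  using assms
proof (induction n)
  case (Suc n)
  have "(\<Prod>j<Suc n. f j) = (\<Prod>j<n. f j) * f n" by simp
  also have "\<dots> \<le> ennreal (exp (\<Sum>j<n. x j)) * ennreal (1 + x n)"
    using Suc by (intro mult_mono) auto
  also have "\<dots> = ennreal (exp (\<Sum>j<n. x j) * (1 + x n))"
    using Suc.prems(2)[of n] by (intro ennreal_mult[symmetric]) auto
  also have "\<dots> \<le> ennreal (exp (\<Sum>j<n. x j) * exp (x n))"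
    using exp_ge_add_one_self[of "x n"] by (intro ennreal_leI mult_left_mono) (auto simp: add.commute)
  also have "\<dots> = ennreal (exp (\<Sum>j<Suc n. x j))" by (simp add: exp_add)
  finally show ?case .
qed simp

lemma integrable_exp_mult_mono:
  fixes f :: "'a \<Rightarrow> real" and a b :: real
  assumes "finite_measure M" and [measurable]: "f \<in> borel_measurable M" and "0 \<le> a" "a \<le> b"
    and "integrable M (\<lambda>\<omega>. exp (b * f \<omega>))"
  shows "integrable M (\<lambda>\<omega>. exp (a * f \<omega>))"
proof (rule Bochner_Integration.integrable_bound)
  show "integrable M (\<lambda>\<omega>. 1 + exp (b * f \<omega>))"
    using assms by (simp add: finite_measure.integrable_const)
  show "AE \<omega> in M. norm (exp (a * f \<omega>)) \<le> norm (1 + exp (b * f \<omega>))"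
  proof (intro AE_I2)
    fix \<omega>
    have "exp (a * f \<omega>) \<le> 1 + exp (b * f \<omega>)"
    proof (cases "f \<omega> \<le> 0")
      case True
      then have "exp (a * f \<omega>) \<le> 1" using \<open>0 \<le> a\<close> by (simp add: mult_nonneg_nonpos)
      then show ?thesis by (simp add: add_increasing2)
    next
      case False
      then have "exp (a * f \<omega>) \<le> exp (b * f \<omega>)" using \<open>a \<le> b\<close> by (simp add: mult_right_mono)
      then show ?thesis by (simp add: add_increasing)
    qed
    then show "norm (exp (a * f \<omega>)) \<le> norm (1 + exp (b * f \<omega>))" by simp
  qed
qed simp

lemma integrable_exp_of_AE_limit:
  fixes S :: "nat \<Rightarrow> 'a \<Rightarrow> real"
  assumes [measurable]: "\<And>n. S n \<in> borel_measurable M" "Y \<in> borel_measurable M"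
    and lim: "AE \<omega> in M. (\<lambda>n. S n \<omega>) \<longlonglongrightarrow> Y \<omega>"
    and bound: "\<And>n. (\<integral>\<^sup>+\<omega>. ennreal (exp (S n \<omega>)) \<partial>M) \<le> ennreal B"
  shows "integrable M (\<lambda>\<omega>. exp (Y \<omega>))"
proof -
  have "(\<integral>\<^sup>+\<omega>. ennreal (exp (Y \<omega>)) \<partial>M) = (\<integral>\<^sup>+\<omega>. liminf (\<lambda>n. ennreal (exp (S n \<omega>))) \<partial>M)"
    using lim
  proof (intro nn_integral_cong_AE, eventually_elim)
    case (elim \<omega>)
    have "(\<lambda>n. ennreal (exp (S n \<omega>))) \<longlonglongrightarrow> ennreal (exp (Y \<omega>))"
      by (intro tendsto_ennrealI tendsto_exp elim)
    from lim_imp_Liminf[OF trivial_limit_sequentially this] show ?case by simp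
  qed
  also have "\<dots> \<le> liminf (\<lambda>n. \<integral>\<^sup>+\<omega>. ennreal (exp (S n \<omega>)) \<partial>M)"
    by (rule nn_integral_liminf) simp
  also have "\<dots> \<le> limsup (\<lambda>n. \<integral>\<^sup>+\<omega>. ennreal (exp (S n \<omega>)) \<partial>M)"
    by (rule Liminf_le_Limsup) simp
  also have "\<dots> \<le> ennreal B"
    by (rule Limsup_bounded) (simp add: bound)
  finally have "(\<integral>\<^sup>+\<omega>. ennreal (exp (Y \<omega>)) \<partial>M) < \<infinity>" by (simp add: le_less_trans)
  then show ?thesis by (intro integrableI_nonneg) auto
qed

lemma same_distr_integrable_iff:
  fixes X Z :: "'a \<Rightarrow> real" and f :: "real \<Rightarrow> real"
  assumes "distr M borel X = distr M borel Z" and [measurable]: "X \<in> borel_measurable M"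
    "Z \<in> borel_measurable M" "f \<in> borel_measurable borel"
  shows "integrable M (\<lambda>\<omega>. f (X \<omega>)) \<longleftrightarrow> integrable M (\<lambda>\<omega>. f (Z \<omega>))"
  using integrable_distr_eq[of X M borel f] integrable_distr_eq[of Z M borel f] assms by simp

lemma same_distr_integral_eq:
  fixes X Z :: "'a \<Rightarrow> real" and f :: "real \<Rightarrow> real"
  assumes "distr M borel X = distr M borel Z" and [measurable]: "X \<in> borel_measurable M"
    "Z \<in> borel_measurable M" "f \<in> borel_measurable borel"
  shows "(\<integral>\<omega>. f (X \<omega>) \<partial>M) = (\<integral>\<omega>. f (Z \<omega>) \<partial>M)"
  using integral_distr[of X M borel f] integral_distr[of Z M borel f] assms by simp

lemma measure_exp_add_indep:
  fixes X A :: "'a \<Rightarrow> real" and t :: real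
  assumes "prob_space M" and [measurable]: "X \<in> borel_measurable M" "A \<in> borel_measurable M"
    and indep: "prob_space.indep_var M borel A borel X"
    and [measurable]: "G \<in> borel_measurable borel"
    and G_eq: "\<And>x. G x = measure M {\<omega>\<in>space M. exp (X \<omega>) > x}"
  shows "measure M {\<omega>\<in>space M. exp (X \<omega> + A \<omega>) > t} = (\<integral>a. G (t * exp (-a)) \<partial>distr M borel A)"
proof -
  interpret prob_space M by fact
  define \<mu> where "\<mu> = distr M borel A"
  define D where "D = distr M borel X"
  interpret D: prob_space D unfolding D_def by (rule prob_space_distr) simp
  have sets_\<mu>[measurable_cong]: "sets \<mu> = sets borel" by (simp add: \<mu>_def)
  have sets_D[measurable_cong]: "sets D = sets borel" by (simp add: D_def)
  define S where "S = {p \<in> space (borel \<Otimes>\<^sub>M borel). exp (snd p + fst p :: real) > t}"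
  have S[measurable]: "S \<in> sets (borel \<Otimes>\<^sub>M borel)"
  proof -
    have f: "(\<lambda>p::real \<times> real. exp (snd p + fst p)) \<in> borel_measurable (borel \<Otimes>\<^sub>M borel)"
      by measurable
    have "S = (\<lambda>p. exp (snd p + fst p)) -` {t<..} \<inter> space (borel \<Otimes>\<^sub>M borel)" by (auto simp: S_def)
    then show ?thesis by (simp only:) (rule measurable_sets[OF f], simp)
  qed
  have "emeasure M {\<omega>\<in>space M. exp (X \<omega> + A \<omega>) > t} = emeasure (distr M (borel \<Otimes>\<^sub>M borel) (\<lambda>\<omega>. (A \<omega>, X \<omega>))) S"
    by (subst emeasure_distr[OF _ S]) (auto simp: S_def space_pair_measure intro!: arg_cong[where f="emeasure M"])
  also have "\<dots> = emeasure (\<mu> \<Otimes>\<^sub>M D) S"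
    using indep unfolding indep_var_distribution_eq \<mu>_def D_def by simp
  also have "\<dots> = (\<integral>\<^sup>+a. emeasure D (Pair a -` S) \<partial>\<mu>)"
    by (rule D.emeasure_pair_measure_alt) (simp add: sets_pair_measure_cong[OF sets_\<mu> sets_D])
  also have "\<dots> = (\<integral>\<^sup>+a. ennreal (G (t * exp (-a))) \<partial>\<mu>)"
  proof (intro nn_integral_cong)
    fix a
    have "emeasure D (Pair a -` S) = emeasure M (X -` (Pair a -` S) \<inter> space M)"
      unfolding D_def by (subst emeasure_distr) (auto simp: S_def space_pair_measure)
    also have "X -` (Pair a -` S) \<inter> space M = {\<omega>\<in>space M. exp (X \<omega>) > t * exp (-a)}"
      by (auto simp: S_def space_pair_measure exp_add exp_minus field_simps)
    finally show "emeasure D (Pair a -` S) = ennreal (G (t * exp (-a)))"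
      by (simp add: G_eq emeasure_eq_measure)
  qed
  finally have "measure M {\<omega>\<in>space M. exp (X \<omega> + A \<omega>) > t} = enn2real (\<integral>\<^sup>+a. ennreal (G (t * exp (-a))) \<partial>\<mu>)"
    by (simp add: measure_def)
  also have "\<dots> = (\<integral>a. G (t * exp (-a)) \<partial>\<mu>)"
    by (rule integral_eq_nn_integral[symmetric]) (auto simp: G_eq)
  finally show ?thesis by (simp add: \<mu>_def)
qed

lemma indep_vars_reindex:
  assumes "prob_space M" and indep: "prob_space.indep_vars M (\<lambda>_. borel) \<eta> UNIV" and "inj k"
  shows "prob_space.indep_vars M (\<lambda>_. borel) (\<lambda>n \<omega>. (\<eta> (k n) \<omega> :: real)) UNIV"
proof -
  interpret prob_space M by fact
  have "indep_vars (\<lambda>j. PiM {k j} (\<lambda>_. borel)) (\<lambda>j \<omega>. restrict (\<lambda>i. \<eta> i \<omega>) {k j}) UNIV"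
    using \<open>inj k\<close> by (intro indep_vars_restrict[OF indep]) (auto simp: disjoint_family_on_def inj_def)
  then have "indep_vars (\<lambda>_. borel) (\<lambda>j \<omega>. (\<lambda>f. f (k j)) (restrict (\<lambda>i. \<eta> i \<omega>) {k j})) UNIV"
    by (rule indep_vars_compose2) simp
  then show ?thesis by simp
qed

lemma distr_iid_reindex:
  assumes "prob_space M" and [measurable]: "\<And>i. \<eta> i \<in> borel_measurable M"
    and indep: "prob_space.indep_vars M (\<lambda>_. borel) \<eta> UNIV"
    and ident: "\<And>i. distr M borel (\<eta> i) = distr M borel (\<eta> i0)" and "inj k"
  shows "distr M (PiM UNIV (\<lambda>_. borel)) (\<lambda>\<omega> n. \<eta> (k n) \<omega> :: real) = PiM UNIV (\<lambda>_. distr M borel (\<eta> i0))"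
proof -
  interpret prob_space M by fact
  have "indep_vars (\<lambda>_. borel) (\<lambda>n \<omega>. \<eta> (k n) \<omega>) UNIV"
    by (rule indep_vars_reindex[OF \<open>prob_space M\<close> indep \<open>inj k\<close>])
  then have "distr M (PiM UNIV (\<lambda>_. borel)) (\<lambda>\<omega> n. \<eta> (k n) \<omega>) = PiM UNIV (\<lambda>n. distr M borel (\<eta> (k n)))"
    using indep_vars_iff_distr_eq_PiM[of UNIV "\<lambda>n \<omega>. \<eta> (k n) \<omega>" "\<lambda>_. borel"]
    by (simp add: restrict_UNIV)
  also have "(\<lambda>n. distr M borel (\<eta> (k n))) = (\<lambda>_. distr M borel (\<eta> i0))"
    by (intro ext ident)
  finally show ?thesis .
qed

lemma nn_integral_exp_weighted_sum_iid:
  fixes \<xi> :: "nat \<Rightarrow> 'a \<Rightarrow> real"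
  assumes "prob_space M" and [measurable]: "\<And>j. \<xi> j \<in> borel_measurable M"
    and indep: "prob_space.indep_vars M (\<lambda>_. borel) \<xi> UNIV"
    and ident: "\<And>j. distr M borel (\<xi> j) = distr M borel (\<xi> 0)"
  shows "(\<integral>\<^sup>+\<omega>. ennreal (exp (\<Sum>j<n. c j * \<xi> j \<omega>)) \<partial>M)
    = (\<Prod>j<n. \<integral>\<^sup>+\<omega>. ennreal (exp (c j * \<xi> 0 \<omega>)) \<partial>M)"
proof -
  interpret prob_space M by fact
  have "(\<integral>\<^sup>+\<omega>. ennreal (exp (\<Sum>j<n. c j * \<xi> j \<omega>)) \<partial>M)
      = (\<integral>\<^sup>+\<omega>. (\<Prod>j<n. ennreal (exp (c j * \<xi> j \<omega>))) \<partial>M)"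
    by (simp add: exp_sum prod_ennreal)
  also have "\<dots> = (\<Prod>j<n. \<integral>\<^sup>+\<omega>. ennreal (exp (c j * \<xi> j \<omega>)) \<partial>M)"
  proof (rule indep_vars_nn_integral)
    have "indep_vars (\<lambda>_. borel) (\<lambda>j \<omega>. (\<lambda>x. ennreal (exp (c j * x))) (\<xi> j \<omega>)) UNIV"
      by (rule indep_vars_compose2[OF indep]) simp
    then show "indep_vars (\<lambda>_. borel) (\<lambda>j \<omega>. ennreal (exp (c j * \<xi> j \<omega>))) {..<n}"
      by (rule indep_vars_subset) simp
  qed auto
  also have "\<dots> = (\<Prod>j<n. \<integral>\<^sup>+\<omega>. ennreal (exp (c j * \<xi> 0 \<omega>)) \<partial>M)"
  proof (intro prod.cong refl)
    fix j
    have "(\<integral>\<^sup>+\<omega>. ennreal (exp (c j * \<xi> j \<omega>)) \<partial>M) = (\<integral>\<^sup>+x. ennreal (exp (c j * x)) \<partial>distr M borel (\<xi> j))"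
      by (subst nn_integral_distr) auto
    also have "\<dots> = (\<integral>\<^sup>+x. ennreal (exp (c j * x)) \<partial>distr M borel (\<xi> 0))"
      by (subst ident[of j]) (rule refl)
    also have "\<dots> = (\<integral>\<^sup>+\<omega>. ennreal (exp (c j * \<xi> 0 \<omega>)) \<partial>M)"
      by (subst nn_integral_distr) auto
    finally show "(\<integral>\<^sup>+\<omega>. ennreal (exp (c j * \<xi> j \<omega>)) \<partial>M) = (\<integral>\<^sup>+\<omega>. ennreal (exp (c j * \<xi> 0 \<omega>)) \<partial>M)" .
  qed
  finally show ?thesis .
qed

section \<open>The causal AR(1) process\<close>

text \<open>The value at time 0 of the causal AR(1) process with innovations \<open>f 0, f 1, \<dots>\<close>
  (that is, \<open>\<eta>\<^sub>0, \<eta>\<^sub>-\<^sub>1, \<dots>\<close>). Where the series diverges, \<open>lim\<close> returns a junk value.\<close>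

definition causal_ar1 :: "real \<Rightarrow> (nat \<Rightarrow> real) \<Rightarrow> real" where
  "causal_ar1 \<phi> f = lim (\<lambda>n. \<Sum>j<n. \<phi> ^ j * f j)"

lemma borel_measurable_causal_ar1[measurable]:
  "causal_ar1 \<phi> \<in> borel_measurable (PiM UNIV (\<lambda>_. borel))"
  unfolding causal_ar1_def by measurable

lemma borel_measurable_causal_ar1_comp:
  assumes "\<And>n. \<xi> n \<in> borel_measurable M"
  shows "(\<lambda>\<omega>. causal_ar1 \<phi> (\<lambda>n. \<xi> n \<omega>)) \<in> borel_measurable M"
proof -
  have "(\<lambda>\<omega> n. \<xi> n \<omega>) \<in> M \<rightarrow>\<^sub>M PiM UNIV (\<lambda>_. borel)"
    using measurable_restrict[of UNIV \<xi> M "\<lambda>_. borel"] assms by (simp add: restrict_UNIV)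
  from measurable_compose[OF this borel_measurable_causal_ar1] show ?thesis by simp
qed

lemma causal_ar1_eqI: "(\<lambda>j. \<phi> ^ j * f j) sums y \<Longrightarrow> causal_ar1 \<phi> f = y"
  by (simp add: causal_ar1_def sums_def limI)

lemma causal_ar1_recursion:
  assumes "(\<lambda>j. \<phi> ^ j * f j) sums y"
  shows "y = f 0 + \<phi> * causal_ar1 \<phi> (\<lambda>n. f (Suc n))"
proof -
  have shifted: "(\<lambda>n. \<phi> * (\<phi> ^ n * f (Suc n))) sums (y - f 0)"
    using sums_Suc_iff[of "\<lambda>j. \<phi> ^ j * f j" "y - f 0"] assms by (simp add: mult.assoc)
  show ?thesis
  proof (cases "\<phi> = 0")
    case True
    then have "(\<lambda>n. 0 :: real) sums (y - f 0)" using shifted by simp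
    then show ?thesis using True sums_unique2[OF _ sums_zero] by fastforce
  next
    case False
    then have "(\<lambda>n. \<phi> ^ n * f (Suc n)) sums ((y - f 0) / \<phi>)"
      using sums_divide[OF shifted, of \<phi>] by simp
    then show ?thesis using False by (simp add: causal_ar1_eqI)
  qed
qed

lemma ar1_innovation_decomposition:
  assumes "(\<lambda>j. \<phi> ^ j * \<eta> (- int j) \<omega>) sums y"
  shows "y = \<eta> 0 \<omega> + \<phi> * causal_ar1 \<phi> (\<lambda>n. \<eta> (- int n - 1) \<omega>)"
proof -
  have "- int (Suc n) = - int n - 1" for n by simp
  then show ?thesis using causal_ar1_recursion[OF assms] by (simp only: of_nat_0 minus_zero)
qed

lemma distr_causal_ar1_shift:
  assumes "prob_space M" and [measurable]: "\<And>i. \<eta> i \<in> borel_measurable M"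
    and "prob_space.indep_vars M (\<lambda>_. borel) \<eta> UNIV"
    and "\<And>i. distr M borel (\<eta> i) = distr M borel (\<eta> 0)"
  shows "distr M borel (\<lambda>\<omega>. causal_ar1 \<phi> (\<lambda>n. \<eta> (- int n - 1) \<omega>))
    = distr M borel (\<lambda>\<omega>. causal_ar1 \<phi> (\<lambda>n. \<eta> (- int n) \<omega>))"
proof -
  have "distr M borel (\<lambda>\<omega>. causal_ar1 \<phi> (\<lambda>n. \<eta> (k n) \<omega>))
      = distr (PiM UNIV (\<lambda>_. distr M borel (\<eta> 0))) borel (causal_ar1 \<phi>)" if "inj k" for k
  proof -
    have [measurable]: "(\<lambda>\<omega> n. \<eta> (k n) \<omega>) \<in> M \<rightarrow>\<^sub>M PiM UNIV (\<lambda>_. borel)"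
      using measurable_restrict[of UNIV "\<lambda>n. \<eta> (k n)" M "\<lambda>_. borel"] by (simp add: restrict_UNIV)
    have "distr M borel (\<lambda>\<omega>. causal_ar1 \<phi> (\<lambda>n. \<eta> (k n) \<omega>))
        = distr (distr M (PiM UNIV (\<lambda>_. borel)) (\<lambda>\<omega> n. \<eta> (k n) \<omega>)) borel (causal_ar1 \<phi>)"
      by (subst distr_distr) (auto simp: comp_def)
    then show ?thesis by (simp add: distr_iid_reindex[OF assms that])
  qed
  moreover have "inj (\<lambda>n::nat. - int n - 1)" "inj (\<lambda>n::nat. - int n)" by (auto simp: inj_def)
  ultimately show ?thesis by simp
qed

lemma indep_var_ar1_past_innovation:
  assumes "prob_space M" and [measurable]: "\<And>i. \<eta> i \<in> borel_measurable M"
    and indep: "prob_space.indep_vars M (\<lambda>_. borel) \<eta> UNIV"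
  shows "prob_space.indep_var M borel (\<lambda>\<omega>. \<phi> * causal_ar1 \<phi> (\<lambda>n. \<eta> (- int n - 1) \<omega>)) borel (\<eta> 0)"
proof -
  interpret prob_space M by fact
  define past where "past f = \<phi> * causal_ar1 \<phi> (\<lambda>n. f (- int n - 1))" for f :: "int \<Rightarrow> real"
  have shift: "(\<lambda>f n. f (- int n - 1) :: real) \<in> PiM {i::int. i < 0} (\<lambda>_. borel) \<rightarrow>\<^sub>M PiM UNIV (\<lambda>_. borel)"
    using measurable_restrict[of UNIV "\<lambda>n f. f (- int n - 1)" "PiM {i::int. i < 0} (\<lambda>_. borel)"
        "\<lambda>_. borel :: real measure"]
    by (simp add: restrict_UNIV measurable_component_singleton)
  have [measurable]: "past \<in> borel_measurable (PiM {i::int. i < 0} (\<lambda>_. borel))"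
    unfolding past_def
    by (rule borel_measurable_times[OF borel_measurable_const measurable_compose[OF shift]]) simp
  have "indep_var (PiM {i::int. i < 0} (\<lambda>_. borel)) (\<lambda>\<omega>. restrict (\<lambda>i. \<eta> i \<omega>) {i. i < 0})
                  (PiM {0} (\<lambda>_. borel)) (\<lambda>\<omega>. restrict (\<lambda>i. \<eta> i \<omega>) {0})"
    by (rule indep_var_restrict[OF indep]) auto
  then have "indep_var borel (past \<circ> (\<lambda>\<omega>. restrict (\<lambda>i. \<eta> i \<omega>) {i. i < 0}))
                  borel ((\<lambda>f. f 0) \<circ> (\<lambda>\<omega>. restrict (\<lambda>i. \<eta> i \<omega>) {0}))"
    by (rule indep_var_compose) (auto simp: past_def)
  moreover have "past \<circ> (\<lambda>\<omega>. restrict (\<lambda>i. \<eta> i \<omega>) {i. i < 0})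
      = (\<lambda>\<omega>. \<phi> * causal_ar1 \<phi> (\<lambda>n. \<eta> (- int n - 1) \<omega>))"
    by (auto simp: fun_eq_iff past_def)
  moreover have "(\<lambda>f. f 0) \<circ> (\<lambda>\<omega>. restrict (\<lambda>i. \<eta> i \<omega>) {0}) = \<eta> 0"
    by (auto simp: fun_eq_iff)
  ultimately show ?thesis by simp
qed

lemma integrable_exp_causal_ar1:
  assumes "prob_space M" and [measurable]: "\<And>i. \<eta> i \<in> borel_measurable M"
    and indep: "prob_space.indep_vars M (\<lambda>_. borel) \<eta> UNIV"
    and ident: "\<And>i. distr M borel (\<eta> i) = distr M borel (\<eta> 0)"
    and "\<bar>\<phi>\<bar> < 1" and [measurable]: "Y \<in> borel_measurable M"
    and Y_def: "AE \<omega> in M. (\<lambda>j. \<phi> ^ j * \<eta> (- int j) \<omega>) sums Y \<omega>"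
    and "K \<ge> 0"
    and mgf: "\<And>j. (\<integral>\<^sup>+\<omega>. ennreal (exp (s * \<phi> ^ j * \<eta> 0 \<omega>)) \<partial>M) \<le> ennreal (1 + \<bar>s * \<phi> ^ j\<bar> * K)"
  shows "integrable M (\<lambda>\<omega>. exp (s * Y \<omega>))"
proof -
  interpret prob_space M by fact
  define S where "S n \<omega> = s * (\<Sum>j<n. \<phi> ^ j * \<eta> (- int j) \<omega>)" for n \<omega>
  have [measurable]: "S n \<in> borel_measurable M" for n unfolding S_def by measurable
  have indep': "indep_vars (\<lambda>_. borel) (\<lambda>j \<omega>. \<eta> (- int j) \<omega>) UNIV"
    by (rule indep_vars_reindex[OF \<open>prob_space M\<close> indep]) (auto simp: inj_def)
  have "(\<integral>\<^sup>+\<omega>. ennreal (exp (S n \<omega>)) \<partial>M) \<le> ennreal (exp (\<bar>s\<bar> * K / (1 - \<bar>\<phi>\<bar>)))" for n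
  proof -
    have "(\<integral>\<^sup>+\<omega>. ennreal (exp (S n \<omega>)) \<partial>M)
        = (\<Prod>j<n. \<integral>\<^sup>+\<omega>. ennreal (exp (s * \<phi> ^ j * \<eta> (- int 0) \<omega>)) \<partial>M)"
      unfolding S_def sum_distrib_left mult.assoc[symmetric]
      by (rule nn_integral_exp_weighted_sum_iid[OF \<open>prob_space M\<close> _ indep']) (auto intro: ident)
    also have "\<dots> \<le> ennreal (exp (\<Sum>j<n. \<bar>s * \<phi> ^ j\<bar> * K))"
      using mgf \<open>K \<ge> 0\<close> by (intro prod_ennreal_le_exp_sum) simp_all
    also have "(\<Sum>j<n. \<bar>s * \<phi> ^ j\<bar> * K) \<le> \<bar>s\<bar> * K / (1 - \<bar>\<phi>\<bar>)"
    proof -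
      have "(\<Sum>j<n. \<bar>\<phi>\<bar> ^ j) \<le> (\<Sum>j. \<bar>\<phi>\<bar> ^ j)"
        using \<open>\<bar>\<phi>\<bar> < 1\<close> by (intro sum_le_suminf summable_geometric) auto
      also have "\<dots> = 1 / (1 - \<bar>\<phi>\<bar>)" using \<open>\<bar>\<phi>\<bar> < 1\<close> by (simp add: suminf_geometric)
      finally have "\<bar>s\<bar> * K * (\<Sum>j<n. \<bar>\<phi>\<bar> ^ j) \<le> \<bar>s\<bar> * K * (1 / (1 - \<bar>\<phi>\<bar>))"
        using \<open>K \<ge> 0\<close> by (intro mult_left_mono) auto
      then show ?thesis by (simp add: sum_distrib_left abs_mult power_abs mult_ac)
    qed
    finally show ?thesis by (simp add: ennreal_leI)
  qed
  moreover have "AE \<omega> in M. (\<lambda>n. S n \<omega>) \<longlonglongrightarrow> s * Y \<omega>"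
    using Y_def by eventually_elim (auto simp: S_def sums_def intro: tendsto_mult_left)
  ultimately show ?thesis
    by (intro integrable_exp_of_AE_limit[where S=S]) auto
qed

lemma ar1_one_step_decomposition:
  fixes \<eta> :: "int \<Rightarrow> 'a \<Rightarrow> real" and \<phi> :: real
  assumes "prob_space M" and [measurable]: "\<And>i. \<eta> i \<in> borel_measurable M"
    and "prob_space.indep_vars M (\<lambda>_. borel) \<eta> UNIV"
    and "\<And>i. distr M borel (\<eta> i) = distr M borel (\<eta> 0)"
    and [measurable]: "Y \<in> borel_measurable M"
    and Y_def: "AE \<omega> in M. (\<lambda>j. \<phi> ^ j * \<eta> (- int j) \<omega>) sums Y \<omega>"
  obtains Y' where "Y' \<in> borel_measurable M" "distr M borel Y' = distr M borel Y"
    "AE \<omega> in M. Y \<omega> = \<eta> 0 \<omega> + \<phi> * Y' \<omega>"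
    "prob_space.indep_var M borel (\<lambda>\<omega>. \<phi> * Y' \<omega>) borel (\<eta> 0)"
proof (rule that[of "\<lambda>\<omega>. causal_ar1 \<phi> (\<lambda>n. \<eta> (- int n - 1) \<omega>)"])
  show "(\<lambda>\<omega>. causal_ar1 \<phi> (\<lambda>n. \<eta> (- int n - 1) \<omega>)) \<in> borel_measurable M"
    by (intro borel_measurable_causal_ar1_comp) simp
  have "distr M borel Y = distr M borel (\<lambda>\<omega>. causal_ar1 \<phi> (\<lambda>n. \<eta> (- int n) \<omega>))"
    using Y_def by (intro distr_cong_AE borel_measurable_causal_ar1_comp)
      (auto elim!: eventually_mono simp: causal_ar1_eqI)
  then show "distr M borel (\<lambda>\<omega>. causal_ar1 \<phi> (\<lambda>n. \<eta> (- int n - 1) \<omega>)) = distr M borel Y"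
    using distr_causal_ar1_shift[OF assms(1-4)] by simp
  show "AE \<omega> in M. Y \<omega> = \<eta> 0 \<omega> + \<phi> * causal_ar1 \<phi> (\<lambda>n. \<eta> (- int n - 1) \<omega>)"
    using Y_def by eventually_elim (rule ar1_innovation_decomposition)
  show "prob_space.indep_var M borel (\<lambda>\<omega>. \<phi> * causal_ar1 \<phi> (\<lambda>n. \<eta> (- int n - 1) \<omega>)) borel (\<eta> 0)"
    by (rule indep_var_ar1_past_innovation[OF assms(1-3)])
qed

section \<open>Regularly varying tails\<close>

locale regularly_varying_tail =
  fixes Fbar L :: "real \<Rightarrow> real" and \<alpha> :: real
  assumes alpha_pos: "\<alpha> > 0"
    and slowly_varying: "slowly_varying L"
    and antimono: "\<And>x y. x \<le> y \<Longrightarrow> Fbar y \<le> Fbar x"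
    and nonneg: "\<And>x. 0 \<le> Fbar x"
    and le_one: "\<And>x. Fbar x \<le> 1"
    and tail_eq: "\<And>x. x > 0 \<Longrightarrow> Fbar x = x powr (-\<alpha>) * L x"
begin

lemma eventually_Fbar_pos: "\<forall>\<^sub>F x in at_top. Fbar x > 0"
proof -
  have "\<forall>\<^sub>F x in at_top. L x > 0" using slowly_varying unfolding slowly_varying_def by blast
  moreover have "\<forall>\<^sub>F x in at_top. (x::real) > 0" by (rule eventually_gt_at_top)
  ultimately show ?thesis by eventually_elim (simp add: tail_eq)
qed

lemma Fbar_ratio_tendsto:
  assumes "c > 0"
  shows "((\<lambda>x. Fbar (c * x) / Fbar x) \<longlongrightarrow> c powr (-\<alpha>)) at_top"
proof -
  have "((\<lambda>x. L (c * x) / L x) \<longlongrightarrow> 1) at_top"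
    using slowly_varying assms unfolding slowly_varying_def by blast
  then have "((\<lambda>x. c powr (-\<alpha>) * (L (c * x) / L x)) \<longlongrightarrow> c powr (-\<alpha>) * 1) at_top"
    by (intro tendsto_mult tendsto_const)
  moreover have "\<forall>\<^sub>F x in at_top. c powr (-\<alpha>) * (L (c * x) / L x) = Fbar (c * x) / Fbar x"
    using eventually_gt_at_top[of 0]
    by eventually_elim (use assms in \<open>simp add: tail_eq powr_mult powr_minus field_simps\<close>)
  ultimately show ?thesis by (simp add: tendsto_cong)
qed

lemma Fbar_ratio_bound_beyond:
  assumes "c > 0" "c powr (-\<alpha>) < b"
  shows "\<exists>x0>0. \<forall>x\<ge>x0. Fbar (c * x) \<le> b * Fbar x \<and> Fbar x > 0"
proof -
  have "\<forall>\<^sub>F x in at_top. Fbar (c * x) / Fbar x < b"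
    using order_tendstoD(2)[OF Fbar_ratio_tendsto assms(2)] assms(1) .
  with eventually_Fbar_pos have "\<forall>\<^sub>F x in at_top. Fbar (c * x) \<le> b * Fbar x \<and> Fbar x > 0"
    by eventually_elim (simp add: divide_less_eq)
  then obtain x1 where "\<forall>x\<ge>x1. Fbar (c * x) \<le> b * Fbar x \<and> Fbar x > 0"
    by (auto simp: eventually_at_top_linorder)
  then show ?thesis by (intro exI[of _ "max x1 1"]) auto
qed

lemma Fbar_dyadic_geometric_bound:
  assumes "0 \<le> \<beta>" "\<beta> < \<alpha>"
  shows "\<exists>K\<ge>0. \<forall>n. Fbar (2 ^ n) \<le> K * (2 powr (-\<beta>)) ^ n"
proof -
  define r where "r = 2 powr (-\<beta>)"
  have r: "0 < r" "r \<le> 1"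
    using assms ge_one_powr_ge_zero[of 2 \<beta>] by (auto simp: r_def powr_minus inverse_le_1_iff)
  obtain x1 where x1: "\<And>x. x \<ge> x1 \<Longrightarrow> Fbar (2 * x) \<le> r * Fbar x"
    using Fbar_ratio_bound_beyond[of 2 r] assms by (auto simp: r_def)
  obtain k where k: "x1 < 2 ^ k" using real_arch_pow[of 2 x1] by auto
  have shifted: "Fbar (2 ^ (k + m)) \<le> r ^ m" for m
  proof (induction m)
    case 0
    show ?case using le_one by simp
  next
    case (Suc m)
    have "x1 \<le> 2 ^ (k + m)"
      using k power_increasing[of k "k + m" "2::real"] by linarith
    then have "Fbar (2 ^ (k + Suc m)) \<le> r * Fbar (2 ^ (k + m))" using x1 by simp
    also have "\<dots> \<le> r * r ^ m" using Suc r by (intro mult_left_mono) auto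
    finally show ?case by simp
  qed
  have "Fbar (2 ^ n) \<le> inverse r ^ k * r ^ n" for n
  proof (cases "n < k")
    case True
    have "Fbar (2 ^ n) \<le> 1" by (rule le_one)
    also have "1 \<le> inverse r ^ (k - n)" using r by (intro one_le_power) (simp add: one_le_inverse)
    also have "inverse r ^ (k - n) = inverse r ^ k * r ^ n"
      using True r by (simp add: power_diff_conv_inverse power_inverse)
    finally show ?thesis .
  next
    case False
    then have "Fbar (2 ^ n) \<le> r ^ (n - k)" using shifted[of "n - k"] by simp
    also have "\<dots> = inverse r ^ k * r ^ n"
      using False r by (simp add: power_diff field_simps)
    finally show ?thesis .
  qed
  then show ?thesis using r by (intro exI[of _ "inverse r ^ k"]) (auto simp: r_def)
qed

definition potter_threshold :: "real \<Rightarrow> real \<Rightarrow> bool" where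
  "potter_threshold \<beta> x0 \<longleftrightarrow> x0 > 0 \<and> (\<forall>x\<ge>x0. Fbar x > 0) \<and>
     (\<forall>u x. x0 \<le> u \<longrightarrow> u \<le> x \<longrightarrow> Fbar u \<le> 2 powr \<beta> * (x / u) powr \<beta> * Fbar x)"

lemma potter_bound_within_dyadic_range:
  assumes "x0 > 0" "\<beta> > 0" and halving: "\<And>x. x \<ge> x0 \<Longrightarrow> Fbar (x / 2) \<le> 2 powr \<beta> * Fbar x"
    and "x0 \<le> u" "u \<le> x" "x \<le> 2 ^ n * u"
  shows "Fbar u \<le> 2 powr \<beta> * (x / u) powr \<beta> * Fbar x"
  using assms(4-6)
proof (induction n arbitrary: x)
  case 0
  then have "x = u" "u > 0" using \<open>x0 > 0\<close> by auto
  then show ?case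
    using \<open>\<beta> > 0\<close> mult_right_mono[OF ge_one_powr_ge_zero[of 2 \<beta>] nonneg[of u]] by simp
next
  case (Suc n)
  have u: "u > 0" using Suc.prems \<open>x0 > 0\<close> by simp
  have two_pow: "1 \<le> 2 powr \<beta>" and ratio_pow: "1 \<le> (x / u) powr \<beta>"
    using Suc.prems u \<open>\<beta> > 0\<close> by (auto intro: ge_one_powr_ge_zero)
  show ?case
  proof (cases "x \<le> 2 * u")
    case True
    have "Fbar u \<le> Fbar (x / 2)" using True by (intro antimono) simp
    also have "\<dots> \<le> 2 powr \<beta> * Fbar x" using halving Suc.prems by simp
    also have "\<dots> \<le> 2 powr \<beta> * (x / u) powr \<beta> * Fbar x"
      using ratio_pow nonneg[of x] two_pow by (simp add: mult_right_mono mult_left_mono)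
    finally show ?thesis .
  next
    case False
    have "Fbar u \<le> 2 powr \<beta> * ((x / 2) / u) powr \<beta> * Fbar (x / 2)"
      using Suc.IH[of "x / 2"] Suc.prems False by simp
    also have "\<dots> \<le> 2 powr \<beta> * ((x / 2) / u) powr \<beta> * (2 powr \<beta> * Fbar x)"
      using halving Suc.prems by (intro mult_left_mono) auto
    also have "\<dots> = 2 powr \<beta> * (((x / u) / 2) powr \<beta> * 2 powr \<beta>) * Fbar x"
      by (simp add: mult.commute)
    also have "((x / u) / 2) powr \<beta> * 2 powr \<beta> = (x / u) powr \<beta>"
      using u Suc.prems by (simp add: powr_divide powr_mult)
    finally show ?thesis by simp
  qed
qed

lemma potter_threshold_exists:
  assumes "\<beta> > \<alpha>"
  shows "\<exists>x0. potter_threshold \<beta> x0"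
proof -
  have "(1/2) powr (-\<alpha>) < 2 powr \<beta>"
    using assms by (simp add: powr_minus_divide powr_divide)
  then obtain x0 where "x0 > 0" and halving: "\<And>x. x \<ge> x0 \<Longrightarrow> Fbar (x / 2) \<le> 2 powr \<beta> * Fbar x \<and> Fbar x > 0"
    using Fbar_ratio_bound_beyond[of "1/2" "2 powr \<beta>"] by auto
  have "Fbar u \<le> 2 powr \<beta> * (x / u) powr \<beta> * Fbar x" if "x0 \<le> u" "u \<le> x" for u x
  proof -
    obtain n where "x / u < 2 ^ n" using real_arch_pow[of 2 "x / u"] by auto
    then have "x \<le> 2 ^ n * u" using that \<open>x0 > 0\<close> by (simp add: divide_less_eq)
    then show ?thesis
      using potter_bound_within_dyadic_range[OF \<open>x0 > 0\<close> _ _ that] halving assms alpha_pos by simp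
  qed
  then show ?thesis using \<open>x0 > 0\<close> halving unfolding potter_threshold_def by blast
qed

lemma power_tail_negligible:
  assumes "\<gamma> > \<alpha>"
  shows "((\<lambda>x. x powr (-\<gamma>) / Fbar x) \<longlongrightarrow> 0) at_top"
proof -
  define \<beta> where "\<beta> = (\<alpha> + \<gamma>) / 2"
  obtain x0 where "potter_threshold \<beta> x0"
    using potter_threshold_exists[of \<beta>] assms by (auto simp: \<beta>_def)
  then have x0: "x0 > 0" "Fbar x0 > 0"
    and bound: "\<And>x. x \<ge> x0 \<Longrightarrow> Fbar x > 0 \<and> Fbar x0 \<le> 2 powr \<beta> * (x / x0) powr \<beta> * Fbar x"
    unfolding potter_threshold_def by auto
  define K where "K = 2 powr \<beta> * x0 powr (-\<beta>) / Fbar x0"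
  have lim: "((\<lambda>x. K * x powr (\<beta> - \<gamma>)) \<longlongrightarrow> K * 0) at_top"
    using assms by (intro tendsto_mult tendsto_const tendsto_neg_powr filterlim_ident) (auto simp: \<beta>_def)
  have upper: "\<forall>\<^sub>F x in at_top. x powr (-\<gamma>) / Fbar x \<le> K * x powr (\<beta> - \<gamma>)"
    using eventually_ge_at_top[of x0]
  proof eventually_elim
    case (elim x)
    have "x > 0" "Fbar x > 0" using elim x0 bound by auto
    have "1 / Fbar x \<le> 2 powr \<beta> * (x / x0) powr \<beta> / Fbar x0"
      using bound[OF elim] x0 \<open>Fbar x > 0\<close>
      by (metis divide_inverse inverse_eq_divide mult.commute pos_divide_le_eq pos_le_divide_eq)
    then have "x powr (-\<gamma>) * (1 / Fbar x)
        \<le> x powr (-\<gamma>) * (2 powr \<beta> * (x / x0) powr \<beta> / Fbar x0)"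
      by (rule mult_left_mono) simp
    then have "x powr (-\<gamma>) / Fbar x \<le> x powr (-\<gamma>) * (2 powr \<beta> * (x / x0) powr \<beta> / Fbar x0)"
      by simp
    also have "(x / x0) powr \<beta> = x powr \<beta> / x0 powr \<beta>"
      using \<open>x > 0\<close> x0 by (simp add: powr_divide)
    also have "x powr (-\<gamma>) * (2 powr \<beta> * (x powr \<beta> / x0 powr \<beta>) / Fbar x0)
        = K * (x powr \<beta> * x powr (-\<gamma>))"
      by (simp add: K_def powr_minus divide_inverse mult_ac)
    also have "x powr \<beta> * x powr (-\<gamma>) = x powr (\<beta> - \<gamma>)"
      by (simp add: powr_add[symmetric])
    finally show ?case .
  qed
  have lower: "\<forall>\<^sub>F x in at_top. 0 \<le> x powr (-\<gamma>) / Fbar x"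
    by (intro always_eventually allI divide_nonneg_nonneg) (auto simp: nonneg)
  show ?thesis using tendsto_sandwich[OF lower upper tendsto_const lim[unfolded mult_zero_right]] .
qed

lemma borel_measurable_Fbar[measurable]: "Fbar \<in> borel_measurable borel"
proof -
  have "mono (\<lambda>x. - Fbar x)" by (auto simp: mono_def intro: antimono)
  then have "(\<lambda>x. - (- Fbar x)) \<in> borel_measurable borel"
    by (intro borel_measurable_uminus borel_measurable_mono)
  then show ?thesis by simp
qed

subsection \<open>Exponential moments\<close>

text \<open>Dyadic decomposition: \<open>exp (t V\<^sup>+) \<le> 1 + \<Sum>\<^sub>n 2 powr (t (n + 1)) [exp V\<^sup>+ > 2 ^ n]\<close>, and the
  tail bound gives \<open>P(exp V\<^sup>+ > 2 ^ n) = O(2 powr (-\<beta> n))\<close> for every \<open>\<beta> < \<alpha>\<close>; take \<open>t < \<beta>\<close>.\<close>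

lemma nn_integral_exp_pos_part_finite:
  assumes "prob_space M" and [measurable]: "V \<in> borel_measurable M" and "c \<ge> 0"
    and tail: "\<And>x. x \<ge> 1 \<Longrightarrow> measure M {\<omega>\<in>space M. exp (max (V \<omega>) 0) > x} \<le> c * Fbar x"
    and "0 \<le> t" "t < \<alpha>"
  shows "(\<integral>\<^sup>+\<omega>. ennreal (exp (t * max (V \<omega>) 0)) \<partial>M) < \<infinity>"
proof -
  interpret prob_space M by fact
  define \<beta> where "\<beta> = (t + \<alpha>) / 2"
  define r where "r = 2 powr (-\<beta>)"
  define q where "q = exp (t * ln 2)"
  obtain K where "K \<ge> 0" and K: "\<And>n. Fbar (2 ^ n) \<le> K * r ^ n"
    using Fbar_dyadic_geometric_bound[of \<beta>] assms by (auto simp: \<beta>_def r_def)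
  have qr: "0 < q * r" "q * r < 1" using assms
    by (auto simp: q_def r_def \<beta>_def powr_def exp_add[symmetric] algebra_simps)
  define S where "S n = {\<omega>\<in>space M. exp (max (V \<omega>) 0) > 2 ^ n}" for n :: nat
  have S[measurable]: "S n \<in> sets M" for n unfolding S_def by measurable
  have pointwise: "ennreal (exp (t * max (V \<omega>) 0)) \<le> 1 + (\<Sum>n. ennreal (q ^ (n + 1)) * indicator (S n) \<omega>)"
    if "\<omega> \<in> space M" for \<omega>
    using ennreal_exp_le_dyadic_sum[OF \<open>0 \<le> t\<close>, of "V \<omega>"] that by (simp add: q_def S_def indicator_def)
  have "(\<integral>\<^sup>+\<omega>. ennreal (exp (t * max (V \<omega>) 0)) \<partial>M)
      \<le> (\<integral>\<^sup>+\<omega>. 1 + (\<Sum>n. ennreal (q ^ (n + 1)) * indicator (S n) \<omega>) \<partial>M)"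
    by (intro nn_integral_mono pointwise)
  also have "\<dots> = 1 + (\<Sum>n. ennreal (q ^ (n + 1)) * emeasure M (S n))"
    by (simp add: nn_integral_add nn_integral_suminf nn_integral_cmult_indicator emeasure_space_1)
  also have "\<dots> \<le> 1 + (\<Sum>n. ennreal (q * (c * K) * (q * r) ^ n))"
  proof (intro add_left_mono suminf_le)
    fix n
    have q: "0 < q" by (simp add: q_def)
    have "measure M (S n) \<le> c * Fbar (2 ^ n)"
      unfolding S_def by (rule tail) simp
    also have "\<dots> \<le> c * (K * r ^ n)"
      using K[of n] \<open>c \<ge> 0\<close> by (rule mult_left_mono)
    finally have "q ^ (n + 1) * measure M (S n) \<le> q ^ (n + 1) * (c * (K * r ^ n))"
      using q by (intro mult_left_mono) auto
    also have "\<dots> = q * (c * K) * (q * r) ^ n"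
      by (simp add: power_mult_distrib mult_ac)
    finally show "ennreal (q ^ (n + 1)) * emeasure M (S n) \<le> ennreal (q * (c * K) * (q * r) ^ n)"
      using q by (simp add: emeasure_eq_measure ennreal_mult[symmetric] ennreal_leI)
  qed auto
  also have "\<dots> < \<infinity>"
    using qr \<open>c \<ge> 0\<close> \<open>K \<ge> 0\<close>
    by (subst suminf_ennreal2) (auto intro!: summable_mult summable_geometric simp: q_def)
  finally show ?thesis .
qed

lemma mgf_linear_bound:
  assumes "prob_space M" and [measurable]: "V \<in> borel_measurable M" and "c \<ge> 0"
    and "\<And>x. x \<ge> 1 \<Longrightarrow> measure M {\<omega>\<in>space M. exp (max (V \<omega>) 0) > x} \<le> c * Fbar x"
    and "0 \<le> t0" "t0 < \<alpha>"
  shows "\<exists>K\<ge>0. \<forall>t. 0 \<le> t \<longrightarrow> t \<le> t0 \<longrightarrow> (\<integral>\<^sup>+\<omega>. ennreal (exp (t * V \<omega>)) \<partial>M) \<le> ennreal (1 + t * K)"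
proof -
  interpret prob_space M by fact
  define t1 where "t1 = (t0 + \<alpha>) / 2"
  have t1: "t0 < t1" "t1 < \<alpha>" using assms by (auto simp: t1_def)
  define B where "B = (\<integral>\<^sup>+\<omega>. ennreal (exp (t1 * max (V \<omega>) 0)) \<partial>M)"
  have "B < \<infinity>" unfolding B_def
    using assms t1 by (intro nn_integral_exp_pos_part_finite[OF assms(1-4)]) auto
  then have B: "B = ennreal (enn2real B)" by simp
  show ?thesis
  proof (intro exI[of _ "enn2real B / (t1 - t0)"] conjI allI impI)
    fix t assume t: "0 \<le> t" "t \<le> t0"
    have "(\<integral>\<^sup>+\<omega>. ennreal (exp (t * V \<omega>)) \<partial>M)
        \<le> (\<integral>\<^sup>+\<omega>. 1 + ennreal (t / (t1 - t0)) * ennreal (exp (t1 * max (V \<omega>) 0)) \<partial>M)"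
    proof (intro nn_integral_mono)
      fix \<omega>
      have "ennreal (exp (t * V \<omega>)) \<le> ennreal (1 + t / (t1 - t0) * exp (t1 * max (V \<omega>) 0))"
        using exp_le_one_plus_linear[OF t t1(1)] by (rule ennreal_leI)
      also have "\<dots> = 1 + ennreal (t / (t1 - t0)) * ennreal (exp (t1 * max (V \<omega>) 0))"
        using t t1 by (simp add: ennreal_mult[symmetric])
      finally show "ennreal (exp (t * V \<omega>))
          \<le> 1 + ennreal (t / (t1 - t0)) * ennreal (exp (t1 * max (V \<omega>) 0))" .
    qed
    also have "\<dots> = 1 + ennreal (t / (t1 - t0)) * B"
      by (simp add: nn_integral_add nn_integral_cmult B_def emeasure_space_1)
    also have "\<dots> = ennreal (1 + t * (enn2real B / (t1 - t0)))"
      using t t1 by (subst B, simp add: ennreal_mult[symmetric] ennreal_plus[symmetric] del: ennreal_plus)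
        (subst ennreal_plus, auto)
    finally show "(\<integral>\<^sup>+\<omega>. ennreal (exp (t * V \<omega>)) \<partial>M) \<le> ennreal (1 + t * (enn2real B / (t1 - t0)))" .
  qed (use t1 in simp)
qed

lemma pos_part_tail_le:
  assumes "\<And>x. Fbar x = measure M {\<omega>\<in>space M. exp (V \<omega>) > x}" and "x \<ge> 1"
  shows "measure M {\<omega>\<in>space M. exp (max (V \<omega>) 0) > x} \<le> 1 * Fbar x"
  using assms by (simp add: exp_max_zero_gt_iff)

lemma mgf_linear_bound_abs:
  assumes "prob_space M" and [measurable]: "V \<in> borel_measurable M"
    and V_tail: "\<And>x. Fbar x = measure M {\<omega>\<in>space M. exp (V \<omega>) > x}" and "c \<ge> 0"
    and tail_neg: "\<And>x. x \<ge> 1 \<Longrightarrow> measure M {\<omega>\<in>space M. exp (max (- V \<omega>) 0) > x} \<le> c * Fbar x"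
    and "0 \<le> t0" "t0 < \<alpha>"
  shows "\<exists>K\<ge>0. \<forall>u. \<bar>u\<bar> \<le> t0 \<longrightarrow> (\<integral>\<^sup>+\<omega>. ennreal (exp (u * V \<omega>)) \<partial>M) \<le> ennreal (1 + \<bar>u\<bar> * K)"
proof -
  obtain K1 where "K1 \<ge> 0" and K1: "\<And>t. 0 \<le> t \<Longrightarrow> t \<le> t0 \<Longrightarrow>
      (\<integral>\<^sup>+\<omega>. ennreal (exp (t * V \<omega>)) \<partial>M) \<le> ennreal (1 + t * K1)"
    using mgf_linear_bound[OF assms(1,2) _ pos_part_tail_le[OF V_tail] assms(6,7)] by auto
  obtain K2 where "K2 \<ge> 0" and K2: "\<And>t. 0 \<le> t \<Longrightarrow> t \<le> t0 \<Longrightarrow>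
      (\<integral>\<^sup>+\<omega>. ennreal (exp (t * - V \<omega>)) \<partial>M) \<le> ennreal (1 + t * K2)"
    using mgf_linear_bound[OF assms(1) _ \<open>c \<ge> 0\<close> tail_neg assms(6,7)] by auto
  have "(\<integral>\<^sup>+\<omega>. ennreal (exp (u * V \<omega>)) \<partial>M) \<le> ennreal (1 + \<bar>u\<bar> * (K1 + K2))"
    if "\<bar>u\<bar> \<le> t0" for u
  proof (cases "u \<ge> 0")
    case True
    then have "(\<integral>\<^sup>+\<omega>. ennreal (exp (u * V \<omega>)) \<partial>M) \<le> ennreal (1 + u * K1)" using K1 that by simp
    also have "\<dots> \<le> ennreal (1 + \<bar>u\<bar> * (K1 + K2))"
      using True \<open>K2 \<ge> 0\<close> by (intro ennreal_leI) (simp add: mult_left_mono)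
    finally show ?thesis .
  next
    case False
    have "(\<integral>\<^sup>+\<omega>. ennreal (exp (u * V \<omega>)) \<partial>M) \<le> ennreal (1 + (- u) * K2)"
      using K2[of "- u"] False that by simp
    also have "\<dots> \<le> ennreal (1 + \<bar>u\<bar> * (K1 + K2))"
      using False \<open>K1 \<ge> 0\<close> by (intro ennreal_leI) (simp add: mult_left_mono)
    finally show ?thesis .
  qed
  then show ?thesis using \<open>K1 \<ge> 0\<close> \<open>K2 \<ge> 0\<close> by (intro exI[of _ "K1 + K2"]) auto
qed

lemma ar1_exp_moment:
  assumes "prob_space M" and [measurable]: "\<And>i. \<eta> i \<in> borel_measurable M"
    and "prob_space.indep_vars M (\<lambda>_. borel) \<eta> UNIV"
    and "\<And>i. distr M borel (\<eta> i) = distr M borel (\<eta> 0)"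
    and "\<bar>\<phi>\<bar> < 1" and [measurable]: "Y \<in> borel_measurable M"
    and "AE \<omega> in M. (\<lambda>j. \<phi> ^ j * \<eta> (- int j) \<omega>) sums Y \<omega>"
    and Fbar_eq: "\<And>x. Fbar x = measure M {\<omega>\<in>space M. exp (\<eta> 0 \<omega>) > x}"
    and neg: "\<phi> < 0 \<Longrightarrow> c > 0 \<and> (\<forall>x\<ge>1. measure M {\<omega>\<in>space M. exp (max (- \<eta> 0 \<omega>) 0) > x} \<le> c * Fbar x)"
  shows "\<exists>\<epsilon>>0. integrable M (\<lambda>\<omega>. exp ((\<alpha> + \<epsilon>) * \<phi> * Y \<omega>))"
proof -
  interpret prob_space M by fact
  show ?thesis
  proof (cases "\<phi> = 0")
    case True
    then show ?thesis by (intro exI[of _ 1]) simp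
  next
    case False
    define a where "a = \<bar>\<phi>\<bar>"
    have a: "0 < a" "a < 1" using False \<open>\<bar>\<phi>\<bar> < 1\<close> by (auto simp: a_def)
    define t0 where "t0 = \<alpha> * (1 + a) / 2"
    have t0: "0 \<le> t0" "t0 < \<alpha>" "\<alpha> * a < t0"
      using a alpha_pos by (auto simp: t0_def field_simps)
    define \<epsilon> where "\<epsilon> = t0 / a - \<alpha>"
    have "\<epsilon> > 0" using t0 a by (simp add: \<epsilon>_def field_simps)
    define s where "s = (\<alpha> + \<epsilon>) * \<phi>"
    have coeff: "\<bar>s * \<phi> ^ j\<bar> \<le> t0" for j
    proof -
      have "\<bar>s * \<phi> ^ j\<bar> = t0 * a ^ j"
        using a t0(1) \<open>\<epsilon> > 0\<close> alpha_pos by (simp add: s_def \<epsilon>_def a_def abs_mult power_abs)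
      also have "\<dots> \<le> t0" using a t0 by (simp add: mult_left_le power_le_one)
      finally show ?thesis .
    qed
    obtain K where "K \<ge> 0"
      and mgf: "\<And>j. (\<integral>\<^sup>+\<omega>. ennreal (exp (s * \<phi> ^ j * \<eta> 0 \<omega>)) \<partial>M) \<le> ennreal (1 + \<bar>s * \<phi> ^ j\<bar> * K)"
    proof (cases "\<phi> < 0")
      case True
      with neg have "c \<ge> 0" and tail_neg: "\<And>x. x \<ge> 1 \<Longrightarrow>
          measure M {\<omega>\<in>space M. exp (max (- \<eta> 0 \<omega>) 0) > x} \<le> c * Fbar x" by auto
      from mgf_linear_bound_abs[OF \<open>prob_space M\<close> _ Fbar_eq \<open>c \<ge> 0\<close> tail_neg t0(1,2)]
      obtain K where "K \<ge> 0"
        and "\<And>u. \<bar>u\<bar> \<le> t0 \<Longrightarrow> (\<integral>\<^sup>+\<omega>. ennreal (exp (u * \<eta> 0 \<omega>)) \<partial>M) \<le> ennreal (1 + \<bar>u\<bar> * K)"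
        by auto
      then show ?thesis using that coeff by blast
    next
      case False
      with \<open>\<phi> \<noteq> 0\<close> have nonneg_coeff: "s * \<phi> ^ j \<ge> 0" for j
        using \<open>\<epsilon> > 0\<close> alpha_pos by (simp add: s_def)
      obtain K where "K \<ge> 0" and K: "\<And>t. 0 \<le> t \<Longrightarrow> t \<le> t0 \<Longrightarrow>
          (\<integral>\<^sup>+\<omega>. ennreal (exp (t * \<eta> 0 \<omega>)) \<partial>M) \<le> ennreal (1 + t * K)"
        using mgf_linear_bound[OF \<open>prob_space M\<close> _ _ pos_part_tail_le[OF Fbar_eq] t0(1,2)] by auto
      show ?thesis
      proof (rule that[OF \<open>K \<ge> 0\<close>])
        fix j
        show "(\<integral>\<^sup>+\<omega>. ennreal (exp (s * \<phi> ^ j * \<eta> 0 \<omega>)) \<partial>M) \<le> ennreal (1 + \<bar>s * \<phi> ^ j\<bar> * K)"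
          using K[OF nonneg_coeff] coeff[of j] nonneg_coeff[of j] by simp
      qed
    qed
    have "integrable M (\<lambda>\<omega>. exp (s * Y \<omega>))"
      by (rule integrable_exp_causal_ar1[OF assms(1-7) \<open>K \<ge> 0\<close> mgf])
    then show ?thesis using \<open>\<epsilon> > 0\<close> by (auto simp: s_def mult.assoc)
  qed
qed

subsection \<open>Breiman's lemma\<close>

lemma potter_ratio_le:
  assumes potter: "potter_threshold \<beta> x0" and "\<beta> \<le> \<gamma>"
    and "x0 \<le> t * exp (-a)" "x0 \<le> t"
  shows "Fbar (t * exp (-a)) / Fbar t \<le> 1 + 2 powr \<beta> * exp (\<gamma> * a)"
proof -
  from potter have "x0 > 0" "Fbar t > 0"
    and bound: "\<And>u x. x0 \<le> u \<Longrightarrow> u \<le> x \<Longrightarrow> Fbar u \<le> 2 powr \<beta> * (x / u) powr \<beta> * Fbar x"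
    using assms(4) unfolding potter_threshold_def by auto
  then have "t > 0" using assms(4) by simp
  show ?thesis
  proof (cases "a \<le> 0")
    case True
    then have "Fbar (t * exp (-a)) \<le> Fbar t" using \<open>t > 0\<close> by (intro antimono) simp
    then have "Fbar (t * exp (-a)) / Fbar t \<le> 1" using \<open>Fbar t > 0\<close> by simp
    then show ?thesis by (simp add: add_increasing2)
  next
    case False
    have "t * exp (-a) \<le> t" using False \<open>t > 0\<close> by simp
    then have "Fbar (t * exp (-a)) \<le> 2 powr \<beta> * (t / (t * exp (-a))) powr \<beta> * Fbar t"
      using bound assms(3) by blast
    also have "t / (t * exp (-a)) = exp a" using \<open>t > 0\<close> by (simp add: exp_minus divide_inverse)
    also have "exp a powr \<beta> = exp (\<beta> * a)" by (simp add: powr_def mult.commute)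
    also have "exp (\<beta> * a) \<le> exp (\<gamma> * a)"
      using False \<open>\<beta> \<le> \<gamma>\<close> by (simp add: mult_right_mono)
    finally have "Fbar (t * exp (-a)) / Fbar t \<le> 2 powr \<beta> * exp (\<gamma> * a)"
      using \<open>Fbar t > 0\<close> by (simp add: divide_le_eq mult_ac)
    then show ?thesis by simp
  qed
qed

lemma truncated_tail_ratio_tendsto:
  assumes "prob_space \<mu>" and [measurable_cong]: "sets \<mu> = sets borel"
    and potter: "potter_threshold \<beta> x0" and "\<beta> \<le> \<gamma>"
    and int: "integrable \<mu> (\<lambda>a. exp (\<gamma> * a))"
  shows "((\<lambda>t. \<integral>a. (if x0 \<le> t * exp (-a) then Fbar (t * exp (-a)) / Fbar t else 0) \<partial>\<mu>)
           \<longlongrightarrow> (\<integral>a. exp (\<alpha> * a) \<partial>\<mu>)) at_top"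
proof -
  interpret prob_space \<mu> by fact
  from potter have pos: "\<And>x. x \<ge> x0 \<Longrightarrow> Fbar x > 0"
    unfolding potter_threshold_def by auto
  define s where "s t a = (if x0 \<le> t * exp (-a) then Fbar (t * exp (-a)) / Fbar t else 0)" for t a
  define w where "w a = 1 + 2 powr \<beta> * exp (\<gamma> * a)" for a
  have "((\<lambda>t. \<integral>a. s t a \<partial>\<mu>) \<longlongrightarrow> (\<integral>a. exp (\<alpha> * a) \<partial>\<mu>)) at_top"
  proof (rule integral_dominated_convergence_at_top[where w=w])
    show "integrable \<mu> w" unfolding w_def using int by simp
    show "AE a in \<mu>. ((\<lambda>t. s t a) \<longlongrightarrow> exp (\<alpha> * a)) at_top"
    proof (intro AE_I2)
      fix a :: real
      have "((\<lambda>t. Fbar (exp (-a) * t) / Fbar t) \<longlongrightarrow> exp (-a) powr (-\<alpha>)) at_top"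
        by (rule Fbar_ratio_tendsto) simp
      moreover have "\<forall>\<^sub>F t in at_top. Fbar (exp (-a) * t) / Fbar t = s t a"
        using eventually_ge_at_top[of "x0 * exp a"]
        by eventually_elim (simp add: s_def exp_minus field_simps)
      ultimately show "((\<lambda>t. s t a) \<longlongrightarrow> exp (\<alpha> * a)) at_top"
        by (simp add: tendsto_cong powr_def)
    qed
    show "\<forall>\<^sub>F t in at_top. AE a in \<mu>. norm (s t a) \<le> w a"
      using eventually_ge_at_top[of x0]
    proof eventually_elim
      case (elim t)
      have "Fbar t > 0" using elim pos by auto
      show ?case
      proof (intro AE_I2)
        fix a :: real
        have "s t a \<le> w a"
        proof (cases "x0 \<le> t * exp (-a)")
          case True
          then show ?thesis
            using potter_ratio_le[OF potter \<open>\<beta> \<le> \<gamma>\<close> True elim] by (simp add: s_def w_def)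
        qed (simp add: s_def w_def add_nonneg_nonneg)
        moreover have "0 \<le> s t a" by (simp add: s_def nonneg)
        ultimately show "norm (s t a) \<le> w a" by simp
      qed
    qed
  qed (simp_all add: s_def)
  then show ?thesis by (simp add: s_def)
qed

lemma truncated_tail_remainder_tendsto_zero:
  assumes "prob_space \<mu>" and [measurable_cong]: "sets \<mu> = sets borel"
    and "x0 > 0" and pos: "\<And>x. x \<ge> x0 \<Longrightarrow> Fbar x > 0" and "\<alpha> < \<gamma>"
    and int: "integrable \<mu> (\<lambda>a. exp (\<gamma> * a))"
  shows "((\<lambda>t. \<integral>a. (if x0 \<le> t * exp (-a) then 0 else Fbar (t * exp (-a)) / Fbar t) \<partial>\<mu>) \<longlongrightarrow> 0) at_top"
proof -
  interpret prob_space \<mu> by fact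
  define r where "r t a = (if x0 \<le> t * exp (-a) then 0 else Fbar (t * exp (-a)) / Fbar t)" for t a
  have [measurable]: "r t \<in> borel_measurable \<mu>" for t unfolding r_def by measurable
  define C where "C = (\<integral>a. exp (\<gamma> * a) \<partial>\<mu>) * x0 powr \<gamma>"
  have lim: "((\<lambda>t. C * (t powr (-\<gamma>) / Fbar t)) \<longlongrightarrow> 0) at_top"
    using tendsto_mult[OF tendsto_const power_tail_negligible[OF \<open>\<alpha> < \<gamma>\<close>], of C] by simp
  have bound: "\<forall>\<^sub>F t in at_top. 0 \<le> (\<integral>a. r t a \<partial>\<mu>) \<and> (\<integral>a. r t a \<partial>\<mu>) \<le> C * (t powr (-\<gamma>) / Fbar t)"
    using eventually_ge_at_top[of x0]
  proof eventually_elim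
    case (elim t)
    have "t > 0" "Fbar t > 0" using elim \<open>x0 > 0\<close> pos by auto
    \<comment> \<open>Markov's inequality in disguise: off the truncation, \<open>exp (\<gamma> a) \<ge> (t / x0) powr \<gamma>\<close>.\<close>
    have r_le: "r t a \<le> exp (\<gamma> * a) * (x0 powr \<gamma> * (t powr (-\<gamma>) / Fbar t))" for a
    proof (cases "x0 \<le> t * exp (-a)")
      case False
      then have "exp (-a) \<le> x0 / t" using \<open>t > 0\<close> by (simp add: field_simps)
      then have "exp (-a) powr \<gamma> \<le> (x0 / t) powr \<gamma>"
        using \<open>\<alpha> < \<gamma>\<close> alpha_pos by (intro powr_mono2) auto
      also have "(x0 / t) powr \<gamma> = x0 powr \<gamma> * t powr (-\<gamma>)"
        using \<open>t > 0\<close> \<open>x0 > 0\<close> by (simp add: powr_divide powr_minus_divide)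
      finally have "exp (\<gamma> * a) * exp (-a) powr \<gamma> \<le> exp (\<gamma> * a) * (x0 powr \<gamma> * t powr (-\<gamma>))"
        by simp
      moreover have "exp (\<gamma> * a) * exp (-a) powr \<gamma> = 1" by (simp add: powr_def exp_add[symmetric])
      ultimately have "1 \<le> exp (\<gamma> * a) * (x0 powr \<gamma> * t powr (-\<gamma>))" by simp
      moreover have "r t a \<le> 1 / Fbar t"
        using False \<open>Fbar t > 0\<close> le_one by (simp add: r_def divide_right_mono)
      ultimately show ?thesis
        using \<open>Fbar t > 0\<close> by (simp add: divide_le_eq field_simps)
    qed (use \<open>Fbar t > 0\<close> in \<open>simp add: r_def\<close>)
    have "integrable \<mu> (r t)"
      by (rule integrable_const_bound[where B="1 / Fbar t"])
         (use \<open>Fbar t > 0\<close> in \<open>auto simp: r_def nonneg le_one divide_right_mono\<close>)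
    then have "(\<integral>a. r t a \<partial>\<mu>) \<le> (\<integral>a. exp (\<gamma> * a) * (x0 powr \<gamma> * (t powr (-\<gamma>) / Fbar t)) \<partial>\<mu>)"
      using int r_le by (intro integral_mono) auto
    also have "\<dots> = C * (t powr (-\<gamma>) / Fbar t)" by (simp add: C_def)
    finally show ?case
      using \<open>Fbar t > 0\<close> by (auto simp: r_def nonneg intro!: integral_nonneg_AE)
  qed
  have "((\<lambda>t. \<integral>a. r t a \<partial>\<mu>) \<longlongrightarrow> 0) at_top"
    by (rule tendsto_sandwich[OF _ _ tendsto_const lim]) (use bound in \<open>auto elim: eventually_mono\<close>)
  then show ?thesis by (simp add: r_def)
qed

lemma tail_ratio_integral_tendsto:
  assumes "prob_space \<mu>" and [measurable_cong]: "sets \<mu> = sets borel" and "\<alpha> < \<gamma>"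
    and "integrable \<mu> (\<lambda>a. exp (\<gamma> * a))"
  shows "((\<lambda>t. (\<integral>a. Fbar (t * exp (-a)) \<partial>\<mu>) / Fbar t) \<longlongrightarrow> (\<integral>a. exp (\<alpha> * a) \<partial>\<mu>)) at_top"
proof -
  interpret prob_space \<mu> by fact
  obtain x0 where potter: "potter_threshold \<gamma> x0"
    using potter_threshold_exists \<open>\<alpha> < \<gamma>\<close> by blast
  then have "x0 > 0" and pos: "\<And>x. x \<ge> x0 \<Longrightarrow> Fbar x > 0" by (auto simp: potter_threshold_def)
  define s where "s t a = (if x0 \<le> t * exp (-a) then Fbar (t * exp (-a)) / Fbar t else 0)" for t a
  define r where "r t a = (if x0 \<le> t * exp (-a) then 0 else Fbar (t * exp (-a)) / Fbar t)" for t a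
  have [measurable]: "s t \<in> borel_measurable \<mu>" "r t \<in> borel_measurable \<mu>" for t
    unfolding s_def r_def by measurable
  have "((\<lambda>t. (\<integral>a. s t a \<partial>\<mu>) + (\<integral>a. r t a \<partial>\<mu>)) \<longlongrightarrow> (\<integral>a. exp (\<alpha> * a) \<partial>\<mu>) + 0) at_top"
    unfolding s_def r_def
    by (intro tendsto_add truncated_tail_ratio_tendsto[OF assms(1,2) potter]
          truncated_tail_remainder_tendsto_zero[OF assms(1,2) \<open>x0 > 0\<close> pos]) (use assms in auto)
  moreover have "\<forall>\<^sub>F t in at_top. (\<integral>a. s t a \<partial>\<mu>) + (\<integral>a. r t a \<partial>\<mu>) = (\<integral>a. Fbar (t * exp (-a)) \<partial>\<mu>) / Fbar t"
    using eventually_ge_at_top[of x0]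
  proof eventually_elim
    case (elim t)
    have "Fbar t > 0" using elim pos by simp
    have "integrable \<mu> (s t)"
      by (rule integrable_const_bound[where B="1 / Fbar t"])
         (use \<open>Fbar t > 0\<close> in \<open>auto simp: s_def nonneg le_one divide_right_mono\<close>)
    moreover have "integrable \<mu> (r t)"
      by (rule integrable_const_bound[where B="1 / Fbar t"])
         (use \<open>Fbar t > 0\<close> in \<open>auto simp: r_def nonneg le_one divide_right_mono\<close>)
    ultimately have "(\<integral>a. s t a \<partial>\<mu>) + (\<integral>a. r t a \<partial>\<mu>) = (\<integral>a. s t a + r t a \<partial>\<mu>)"
      by simp
    also have "\<dots> = (\<integral>a. Fbar (t * exp (-a)) / Fbar t \<partial>\<mu>)"
      by (rule Bochner_Integration.integral_cong) (auto simp: s_def r_def)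
    finally show ?case by simp
  qed
  ultimately show ?thesis by (simp add: tendsto_cong)
qed

lemma breiman_asymp_equiv:
  assumes "prob_space M" and [measurable]: "X \<in> borel_measurable M" "A \<in> borel_measurable M"
    and indep: "prob_space.indep_var M borel A borel X"
    and Fbar_eq: "\<And>x. Fbar x = measure M {\<omega>\<in>space M. exp (X \<omega>) > x}"
    and "\<alpha> < \<gamma>" and int: "integrable M (\<lambda>\<omega>. exp (\<gamma> * A \<omega>))"
  shows "(\<lambda>x. measure M {\<omega>\<in>space M. exp (X \<omega> + A \<omega>) > x})
           \<sim>[at_top] (\<lambda>x. (\<integral>\<omega>. exp (\<alpha> * A \<omega>) \<partial>M) * Fbar x)"
proof -
  interpret prob_space M by fact
  define \<mu> where "\<mu> = distr M borel A"
  define E where "E = (\<integral>\<omega>. exp (\<alpha> * A \<omega>) \<partial>M)"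
  have "prob_space \<mu>" unfolding \<mu>_def by (rule prob_space_distr) simp
  have sets_\<mu>: "sets \<mu> = sets borel" by (simp add: \<mu>_def)
  have int_\<mu>: "integrable \<mu> (\<lambda>a. exp (\<gamma> * a))" using int by (simp add: \<mu>_def integrable_distr_eq)
  have "finite_measure M" by (rule finite_measureI) simp
  then have "integrable M (\<lambda>\<omega>. exp (\<alpha> * A \<omega>))"
    by (rule integrable_exp_mult_mono[OF _ _ _ _ int]) (use alpha_pos \<open>\<alpha> < \<gamma>\<close> in auto)
  then have "E = 0 \<longleftrightarrow> (AE \<omega> in M. exp (\<alpha> * A \<omega>) = 0)"
    unfolding E_def by (rule integral_nonneg_eq_0_iff_AE) simp
  then have "E \<noteq> 0" by (simp add: AE_False)
  have eq: "measure M {\<omega>\<in>space M. exp (X \<omega> + A \<omega>) > x} = (\<integral>a. Fbar (x * exp (-a)) \<partial>\<mu>)" for x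
    unfolding \<mu>_def by (rule measure_exp_add_indep[OF \<open>prob_space M\<close> _ _ indep borel_measurable_Fbar Fbar_eq])
      simp_all
  have "(\<integral>a. exp (\<alpha> * a) \<partial>\<mu>) = E" by (simp add: \<mu>_def E_def integral_distr)
  moreover have "((\<lambda>x. (\<integral>a. Fbar (x * exp (-a)) \<partial>\<mu>) / Fbar x) \<longlongrightarrow> (\<integral>a. exp (\<alpha> * a) \<partial>\<mu>)) at_top"
    by (rule tail_ratio_integral_tendsto[OF \<open>prob_space \<mu>\<close> sets_\<mu> \<open>\<alpha> < \<gamma>\<close> int_\<mu>])
  ultimately have "((\<lambda>x. measure M {\<omega>\<in>space M. exp (X \<omega> + A \<omega>) > x} / Fbar x / E) \<longlongrightarrow> E / E) at_top"
    unfolding eq using \<open>E \<noteq> 0\<close> by (intro tendsto_divide tendsto_const) simp_all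
  then have "((\<lambda>x. measure M {\<omega>\<in>space M. exp (X \<omega> + A \<omega>) > x} / (E * Fbar x)) \<longlongrightarrow> 1) at_top"
    using \<open>E \<noteq> 0\<close> by (simp add: divide_divide_eq_left mult.commute)
  then show ?thesis unfolding E_def by (rule asymp_equivI')
qed

lemma breiman_asymp_equiv_recursion:
  assumes "prob_space M" and [measurable]: "X \<in> borel_measurable M" "Z \<in> borel_measurable M"
      "Z' \<in> borel_measurable M"
    and same_distr: "distr M borel Z' = distr M borel Z"
    and Z_eq: "AE \<omega> in M. Z \<omega> = X \<omega> + \<phi> * Z' \<omega>"
    and indep: "prob_space.indep_var M borel (\<lambda>\<omega>. \<phi> * Z' \<omega>) borel X"
    and Fbar_eq: "\<And>x. Fbar x = measure M {\<omega>\<in>space M. exp (X \<omega>) > x}"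
    and "\<epsilon> > 0" and int: "integrable M (\<lambda>\<omega>. exp ((\<alpha> + \<epsilon>) * \<phi> * Z \<omega>))"
  shows "(\<lambda>x. measure M {\<omega>\<in>space M. exp (Z \<omega>) > x})
           \<sim>[at_top] (\<lambda>x. (\<integral>\<omega>. exp (\<alpha> * \<phi> * Z \<omega>) \<partial>M) * Fbar x)"
proof -
  interpret prob_space M by fact
  have "integrable M (\<lambda>\<omega>. exp ((\<alpha> + \<epsilon>) * (\<phi> * Z' \<omega>)))"
    using int same_distr_integrable_iff[OF same_distr, of "\<lambda>z. exp ((\<alpha> + \<epsilon>) * \<phi> * z)"]
    by (simp add: mult.assoc)
  then have "(\<lambda>x. measure M {\<omega>\<in>space M. exp (X \<omega> + \<phi> * Z' \<omega>) > x})
      \<sim>[at_top] (\<lambda>x. (\<integral>\<omega>. exp (\<alpha> * (\<phi> * Z' \<omega>)) \<partial>M) * Fbar x)"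
    using \<open>\<epsilon> > 0\<close> by (intro breiman_asymp_equiv[OF \<open>prob_space M\<close> _ _ indep Fbar_eq]) auto
  moreover have "measure M {\<omega>\<in>space M. exp (Z \<omega>) > x} = measure M {\<omega>\<in>space M. exp (X \<omega> + \<phi> * Z' \<omega>) > x}"
    for x
    using Z_eq by (intro measure_eq_AE) auto
  moreover have "(\<integral>\<omega>. exp (\<alpha> * (\<phi> * Z' \<omega>)) \<partial>M) = (\<integral>\<omega>. exp (\<alpha> * \<phi> * Z \<omega>) \<partial>M)"
    using same_distr_integral_eq[OF same_distr, of "\<lambda>z. exp (\<alpha> * \<phi> * z)"] by (simp add: mult.assoc)
  ultimately show ?thesis by simp
qed

end

lemma regularly_varying_tail_measure:
  assumes "prob_space M" and [measurable]: "X \<in> borel_measurable M" and "\<alpha> > 0" "slowly_varying L"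
    and "\<And>x. x > 0 \<Longrightarrow> measure M {\<omega>\<in>space M. exp (X \<omega>) > x} = x powr (-\<alpha>) * L x"
  shows "regularly_varying_tail (\<lambda>x. measure M {\<omega>\<in>space M. exp (X \<omega>) > x}) L \<alpha>"
proof
  interpret prob_space M by fact
  show "measure M {\<omega>\<in>space M. exp (X \<omega>) > y} \<le> measure M {\<omega>\<in>space M. exp (X \<omega>) > x}"
    if "x \<le> y" for x y
    using that by (intro finite_measure_mono) auto
qed (use assms prob_space.prob_le_1 in auto)

theorem lemma3p2:
  fixes M :: "'a measure" and \<eta> :: "int \<Rightarrow> 'a \<Rightarrow> real" and Y :: "'a \<Rightarrow> real"
    and \<phi> \<alpha> c :: real and L :: "real \<Rightarrow> real"
  assumes "prob_space M"
    and meas: "\<And>t. \<eta> t \<in> borel_measurable M"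
    and indep: "prob_space.indep_vars M (\<lambda>_. borel) \<eta> UNIV"
    and ident: "\<And>t. distr M borel (\<eta> t) = distr M borel (\<eta> 0)"
    and phi: "-1 < \<phi>" "\<phi> < 1"
    and Y_meas: "Y \<in> borel_measurable M"
    and Y_def: "AE \<omega> in M. (\<lambda>j. \<phi> ^ j * \<eta> (- int j) \<omega>) sums Y \<omega>"
    and alpha: "\<alpha> > 0"
    and L: "slowly_varying L"
    and tail: "\<And>x. x > 0 \<Longrightarrow>
       measure M {\<omega> \<in> space M. exp (\<eta> 0 \<omega>) > x} = x powr (-\<alpha>) * L x"
    and neg: "\<phi> < 0 \<Longrightarrow> c > 0 \<and> (\<forall>x\<ge>1.
       measure M {\<omega> \<in> space M. exp (max (- \<eta> 0 \<omega>) 0) > x}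
         \<le> c * measure M {\<omega> \<in> space M. exp (\<eta> 0 \<omega>) > x})"
  shows "(\<exists>\<epsilon>>0. integrable M (\<lambda>\<omega>. exp ((\<alpha> + \<epsilon>) * \<phi> * Y \<omega>)))
    \<and> (\<lambda>x. measure M {\<omega> \<in> space M. exp (Y \<omega>) > x})
        \<sim>[at_top] (\<lambda>x. (\<integral>\<omega>. exp (\<alpha> * \<phi> * Y \<omega>) \<partial>M)
                            * measure M {\<omega> \<in> space M. exp (\<eta> 0 \<omega>) > x})"
proof -
  interpret prob_space M by fact
  define Fbar where "Fbar x = measure M {\<omega> \<in> space M. exp (\<eta> 0 \<omega>) > x}" for x
  interpret regularly_varying_tail Fbar L \<alpha>
    unfolding Fbar_def[abs_def] using \<open>prob_space M\<close> meas alpha L tail by (rule regularly_varying_tail_measure)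
  obtain Y' where Y': "Y' \<in> borel_measurable M" "distr M borel Y' = distr M borel Y"
    "AE \<omega> in M. Y \<omega> = \<eta> 0 \<omega> + \<phi> * Y' \<omega>" "indep_var borel (\<lambda>\<omega>. \<phi> * Y' \<omega>) borel (\<eta> 0)"
    using ar1_one_step_decomposition[OF \<open>prob_space M\<close> meas indep ident Y_meas Y_def] by blast
  have "\<bar>\<phi>\<bar> < 1" using phi by auto
  then obtain \<epsilon> where "\<epsilon> > 0" and int: "integrable M (\<lambda>\<omega>. exp ((\<alpha> + \<epsilon>) * \<phi> * Y \<omega>))"
    using ar1_exp_moment[OF \<open>prob_space M\<close> meas indep ident _ Y_meas Y_def Fbar_def neg[folded Fbar_def]]
    by blast
  moreover have "(\<lambda>x. measure M {\<omega> \<in> space M. exp (Y \<omega>) > x})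
      \<sim>[at_top] (\<lambda>x. (\<integral>\<omega>. exp (\<alpha> * \<phi> * Y \<omega>) \<partial>M) * Fbar x)"
    by (rule breiman_asymp_equiv_recursion) (use \<open>prob_space M\<close> meas Y_meas Fbar_def \<open>\<epsilon> > 0\<close> int Y' in auto)
  ultimately show ?thesis unfolding Fbar_def by blast
qed

end
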